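(* For any proper, lsc, convex $f:\mathbb R^n\to\overline{\mathbb R}$, $f$ is B-smooth if and only if $f=\overleftarrow{\mathrm{env}}_\phi g$ for some proper function $g:\mathbb R^n\to\overline{\mathbb R}$.
   Context: Standing assumption: $\phi:\mathbb R^n\to\mathbb R$ is convex, finite-valued, differentiable and strictly convex (Legendre with full domain), super-coercive. $D_\phi(x,y)=\phi(x)-\phi(y)-\langle\nabla\phi(y),x-y\rangle$, and $\overleftarrow{\mathrm{env}}_\phi g(x)=\inf_y\{g(y)+D_\phi(x,y)\}$. $f$ is B-weakly convex if $f+\phi$ is convex, and B-smooth if both $f$ and $-f$ are proper and B-weakly convex. *)

theory Defs
  imports "HOL-Analysis.Analysis"
begin

definition proper_fun :: "('a \<Rightarrow> ereal) \<Rightarrow> bool" where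
  "proper_fun f \<longleftrightarrow> (\<forall>x. f x \<noteq> -\<infinity>) \<and> (\<exists>x. f x \<noteq> \<infinity>)"

definition econvex :: "('a::real_vector \<Rightarrow> ereal) \<Rightarrow> bool" where
  "econvex f \<longleftrightarrow> convex {(x, t::real). f x \<le> ereal t}"

definition lsc_fun :: "('a::topological_space \<Rightarrow> ereal) \<Rightarrow> bool" where
  "lsc_fun f \<longleftrightarrow> (\<forall>x. f x \<le> Liminf (at x) f)"

definition strictly_convex :: "('a::real_vector \<Rightarrow> real) \<Rightarrow> bool" where
  "strictly_convex \<phi> \<longleftrightarrow>
     (\<forall>x y t. x \<noteq> y \<longrightarrow> 0 < t \<longrightarrow> t < 1 \<longrightarrow>
        \<phi> ((1 - t) *\<^sub>R x + t *\<^sub>R y) < (1 - t) * \<phi> x + t * \<phi> y)"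

definition super_coercive :: "('a::real_normed_vector \<Rightarrow> real) \<Rightarrow> bool" where
  "super_coercive \<phi> \<longleftrightarrow> filterlim (\<lambda>x. \<phi> x / norm x) at_top at_infinity"

definition legendre_full :: "('a::euclidean_space \<Rightarrow> real) \<Rightarrow> bool" where
  "legendre_full \<phi> \<longleftrightarrow> convex_on UNIV \<phi> \<and> (\<forall>x. \<phi> differentiable (at x))
     \<and> strictly_convex \<phi> \<and> super_coercive \<phi>"

definition bregman :: "('a::euclidean_space \<Rightarrow> real) \<Rightarrow> 'a \<Rightarrow> 'a \<Rightarrow> real" where
  "bregman \<phi> x y = \<phi> x - \<phi> y - frechet_derivative \<phi> (at y) (x - y)"

definition left_env :: "('a::euclidean_space \<Rightarrow> real) \<Rightarrow> ('a \<Rightarrow> ereal) \<Rightarrow> 'a \<Rightarrow> ereal" where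
  "left_env \<phi> g x = (INF y. g y + ereal (bregman \<phi> x y))"

definition B_weakly_convex :: "('a::euclidean_space \<Rightarrow> real) \<Rightarrow> ('a \<Rightarrow> ereal) \<Rightarrow> bool" where
  "B_weakly_convex \<phi> f \<longleftrightarrow> econvex (\<lambda>x. f x + ereal (\<phi> x))"

definition B_smooth :: "('a::euclidean_space \<Rightarrow> real) \<Rightarrow> ('a \<Rightarrow> ereal) \<Rightarrow> bool" where
  "B_smooth \<phi> f \<longleftrightarrow> proper_fun f \<and> proper_fun (\<lambda>x. - f x)
     \<and> B_weakly_convex \<phi> f \<and> B_weakly_convex \<phi> (\<lambda>x. - f x)"

end

theory Submission
  imports Defs
begin

text \<open>
  If f is B-smooth then f is real valued and \<phi> - f is convex. A subgradient v of \<phi> - f at x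
  is, by super-coercivity, the gradient of \<phi> at some point y, and then z \<mapsto> f z - D(z,y) is
  maximal at z = x. Hence f = env g for g y = sup_x (f x - D(x,y)), the infimum defining
  env g at x being attained at this y.
  Conversely \<phi> x - env g x = sup_y (\<phi> y + \<nabla>\<phi>(y)\<cdot>(x - y) - g y) is a supremum of affine
  functions, so -f is B-weakly convex, while f + \<phi> is convex because f and \<phi> are.
\<close>

lemma econvex_ereal_iff_convex_on:
  fixes F :: "'a::real_vector \<Rightarrow> real"
  shows "econvex (\<lambda>x. ereal (F x)) \<longleftrightarrow> convex_on UNIV F"
proof -
  have "{(x, t). ereal (F x) \<le> ereal t} = epigraph UNIV F"
    by (auto simp: epigraph_def)
  then show ?thesis
    by (simp add: econvex_def convex_epigraph)
qed

lemma econvex_SUP: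
  fixes F :: "'i \<Rightarrow> 'a::real_vector \<Rightarrow> ereal"
  assumes "\<And>i. i \<in> I \<Longrightarrow> econvex (F i)"
  shows "econvex (\<lambda>x. SUP i\<in>I. F i x)"
proof -
  have "{(x, t). (SUP i\<in>I. F i x) \<le> ereal t} = (\<Inter>i\<in>I. {(x, t). F i x \<le> ereal t})"
    by (auto simp: SUP_le_iff)
  then show ?thesis
    using assms by (simp add: econvex_def convex_INT)
qed

lemma convex_on_const_plus_linear:
  fixes L :: "'a::real_vector \<Rightarrow> real"
  assumes "linear L"
  shows "convex_on UNIV (\<lambda>x. c + L x)"
  using assms by (auto simp: convex_on_def linear_add linear_scale algebra_simps
      simp flip: distrib_right)

lemma econvex_ereal_minus_const:
  fixes F :: "'a::real_vector \<Rightarrow> real"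
  assumes "convex_on UNIV F"
  shows "econvex (\<lambda>x. ereal (F x) - c)"
proof (cases c)
  case (real r)
  have "convex_on UNIV (\<lambda>x. F x - r)"
    using assms by (rule convex_on_diff) (simp add: concave_on_const)
  then show ?thesis
    using econvex_ereal_iff_convex_on[of "\<lambda>x. F x - r"] by (simp add: real)
qed (simp_all add: econvex_def)

lemma convex_on_UNIV_subgradient:
  fixes h :: "'a::euclidean_space \<Rightarrow> real"
  assumes "convex_on UNIV h"
  obtains v where "\<And>z. h x + v \<bullet> (z - x) \<le> h z"
proof -
  let ?E = "epigraph UNIV h"
  have convex: "convex ?E"
    using assms by (rule convex_epigraph[THEN iffD2])
  have on_graph: "(x, h x) \<in> ?E" and above: "(x, h x + 1) \<in> ?E"
    by (simp_all add: epigraph_def)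
  have "(x, h x) \<notin> rel_interior ?E"
  proof
    assume "(x, h x) \<in> rel_interior ?E"
    then obtain e where "e > 1" "(1 - e) *\<^sub>R (x, h x + 1) + e *\<^sub>R (x, h x) \<in> ?E"
      using convex_rel_interior_iff[OF convex] on_graph above by blast
    then show False
      by (simp add: epigraph_def algebra_simps flip: scaleR_add_left)
  qed
  then obtain a where "a \<noteq> 0" and supp: "\<And>p. p \<in> ?E \<Longrightarrow> a \<bullet> (x, h x) \<le> a \<bullet> p"
    using supporting_hyperplane_rel_boundary[OF convex on_graph] by metis
  obtain a1 a2 where a: "a = (a1, a2)"
    by (cases a)
  have supp': "a1 \<bullet> x + a2 * h x \<le> a1 \<bullet> z + a2 * t" if "h z \<le> t" for z t
    using supp[of "(z, t)"] that by (simp add: epigraph_def a inner_Pair)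
  have "a2 \<ge> 0"
    using supp'[of x "h x + 1"] by (simp add: algebra_simps)
  moreover have "a2 \<noteq> 0" \<comment> \<open>a vertical hyperplane cannot support the graph of a finite h\<close>
  proof
    assume "a2 = 0"
    then have "a1 \<bullet> a1 \<le> 0"
      using supp'[of "x - a1" "h (x - a1)"] by (simp add: inner_diff_right)
    then have "a1 = 0"
      by (metis inner_eq_zero_iff inner_ge_zero order_antisym)
    then show False
      using \<open>a \<noteq> 0\<close> \<open>a2 = 0\<close> by (simp add: a zero_prod_def)
  qed
  ultimately have "a2 > 0"
    by simp
  show ?thesis
  proof
    fix z
    have "(- (1 / a2) *\<^sub>R a1) \<bullet> (z - x) = (a1 \<bullet> x - a1 \<bullet> z) / a2"
      by (simp add: inner_diff_right diff_divide_distrib)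
    also have "\<dots> \<le> h z - h x"
      using supp'[of z "h z"] \<open>a2 > 0\<close> by (simp add: field_simps)
    finally show "h x + (- (1 / a2) *\<^sub>R a1) \<bullet> (z - x) \<le> h z"
      by simp
  qed
qed

lemma continuous_on_UNIV_attains_global_min:
  fixes \<psi> :: "'a::euclidean_space \<Rightarrow> real"
  assumes "continuous_on UNIV \<psi>" and "0 \<le> R"
    and "\<And>z. R \<le> norm z \<Longrightarrow> \<psi> 0 \<le> \<psi> z"
  obtains y where "\<And>z. \<psi> y \<le> \<psi> z"
proof -
  obtain y where "y \<in> cball 0 R" and min_ball: "\<And>z. z \<in> cball 0 R \<Longrightarrow> \<psi> y \<le> \<psi> z"
    using continuous_attains_inf[of "cball 0 R" \<psi>] assms(1,2)
    by (metis compact_cball cball_eq_empty continuous_on_subset not_less subset_UNIV)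
  have "\<psi> y \<le> \<psi> z" for z
  proof (cases "norm z \<le> R")
    case False
    then have "\<psi> 0 \<le> \<psi> z"
      using assms(3) by simp
    then show ?thesis
      using min_ball[of 0] assms(2) by simp
  qed (simp add: min_ball)
  then show ?thesis
    by (rule that)
qed

lemma super_coercive_dominates_bounded_linear:
  fixes \<phi> :: "'a::real_normed_vector \<Rightarrow> real"
  assumes "super_coercive \<phi>" and "bounded_linear L"
  obtains R where "0 \<le> R" and "\<And>z. R \<le> norm z \<Longrightarrow> \<phi> 0 \<le> \<phi> z - L z"
proof -
  obtain K where K: "\<And>z. norm (L z) \<le> norm z * K"
    using bounded_linear.bounded[OF assms(2)] by blast
  have "\<forall>\<^sub>F z in at_infinity. K + \<bar>\<phi> 0\<bar> + 1 \<le> \<phi> z / norm z"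
    using assms(1) unfolding super_coercive_def filterlim_at_top by blast
  then obtain b where b: "\<And>z. b \<le> norm z \<Longrightarrow> K + \<bar>\<phi> 0\<bar> + 1 \<le> \<phi> z / norm z"
    unfolding eventually_at_infinity by blast
  show ?thesis
  proof
    fix z :: 'a
    assume z: "max b 1 \<le> norm z"
    then have "1 \<le> norm z"
      by simp
    moreover have "(K + \<bar>\<phi> 0\<bar> + 1) * norm z \<le> \<phi> z"
      using z b[of z] \<open>1 \<le> norm z\<close> pos_le_divide_eq[of "norm z" "K + \<bar>\<phi> 0\<bar> + 1" "\<phi> z"]
      by linarith
    moreover have "L z \<le> norm z * K"
      using K[of z] by simp
    moreover have "\<bar>\<phi> 0\<bar> * 1 \<le> \<bar>\<phi> 0\<bar> * norm z"
      using \<open>1 \<le> norm z\<close> by (intro mult_left_mono) simp_all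
    ultimately show "\<phi> 0 \<le> \<phi> z - L z"
      by (simp add: algebra_simps)
  qed simp
qed

lemma super_coercive_frechet_derivative_surj:
  fixes \<phi> :: "'a::euclidean_space \<Rightarrow> real"
  assumes diff: "\<And>x. \<phi> differentiable (at x)" and "super_coercive \<phi>" and "linear L"
  obtains y where "frechet_derivative \<phi> (at y) = L"
proof -
  have cont: "continuous_on UNIV (\<lambda>z. \<phi> z - L z)"
    using diff \<open>linear L\<close>
    by (intro continuous_on_diff continuous_at_imp_continuous_on ballI
        differentiable_imp_continuous_within linear_continuous_on)
      (simp_all add: linear_conv_bounded_linear)
  obtain R where "0 \<le> R" "\<And>z. R \<le> norm z \<Longrightarrow> \<phi> 0 - L 0 \<le> \<phi> z - L z"
    using super_coercive_dominates_bounded_linear[OF \<open>super_coercive \<phi>\<close>, of L] \<open>linear L\<close>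
    by (metis diff_zero linear_0 linear_conv_bounded_linear)
  then obtain y where min: "\<And>z. \<phi> y - L y \<le> \<phi> z - L z"
    using continuous_on_UNIV_attains_global_min[OF cont] by blast
  have "((\<lambda>z. \<phi> z - L z) has_derivative (\<lambda>d. frechet_derivative \<phi> (at y) d - L d)) (at y)"
    using diff \<open>linear L\<close>
    by (intro has_derivative_diff iffD1[OF frechet_derivative_works] linear_imp_has_derivative)
  then have "(\<lambda>d. frechet_derivative \<phi> (at y) d - L d) = (\<lambda>d. 0)"
    by (rule has_derivative_local_min) (simp add: min)
  then show ?thesis
    by (intro that) (simp add: fun_eq_iff)
qed

lemma diff_bregman_eq_linearization:
  "\<phi> x - bregman \<phi> x y = \<phi> y + frechet_derivative \<phi> (at y) (x - y)"
  by (simp add: bregman_def)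

lemma ereal_minus_add_ereal:
  "ereal a - (c + ereal d) = ereal (a - d) - c"
  by (cases c) simp_all

lemma econvex_ereal_minus_left_env:
  fixes \<phi> :: "'a::euclidean_space \<Rightarrow> real"
  assumes "\<And>y. \<phi> differentiable (at y)"
  shows "econvex (\<lambda>x. ereal (\<phi> x) - left_env \<phi> g x)"
proof -
  have "ereal (\<phi> x) - left_env \<phi> g x
      = (SUP y. ereal (\<phi> y + frechet_derivative \<phi> (at y) (x - y)) - g y)" for x
    by (simp add: left_env_def ereal_minus_add_ereal diff_bregman_eq_linearization
        flip: SUP_ereal_minus_right)
  moreover have "econvex (\<lambda>x. ereal (\<phi> y + frechet_derivative \<phi> (at y) (x - y)) - g y)" for y
  proof (rule econvex_ereal_minus_const)
    have lin: "linear (frechet_derivative \<phi> (at y))"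
      using assms by (rule linear_frechet_derivative)
    then have "(\<lambda>x. \<phi> y + frechet_derivative \<phi> (at y) (x - y))
        = (\<lambda>x. (\<phi> y - frechet_derivative \<phi> (at y) y) + frechet_derivative \<phi> (at y) x)"
      by (simp add: linear_diff fun_eq_iff)
    then show "convex_on UNIV (\<lambda>x. \<phi> y + frechet_derivative \<phi> (at y) (x - y))"
      using convex_on_const_plus_linear[OF lin] by simp
  qed
  ultimately show ?thesis
    by (simp add: econvex_SUP)
qed

lemma bregman_touching_point:
  fixes \<phi> F :: "'a::euclidean_space \<Rightarrow> real"
  assumes "\<And>x. \<phi> differentiable (at x)" and "super_coercive \<phi>"
    and "convex_on UNIV (\<lambda>x. \<phi> x - F x)"
  shows "\<exists>y. \<forall>z. F z - bregman \<phi> z y \<le> F x - bregman \<phi> x y"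
proof -
  obtain v where v: "\<And>z. (\<phi> x - F x) + v \<bullet> (z - x) \<le> \<phi> z - F z"
    using convex_on_UNIV_subgradient[OF assms(3)] by blast
  obtain y where y: "frechet_derivative \<phi> (at y) = (\<lambda>d. v \<bullet> d)"
    using super_coercive_frechet_derivative_surj[OF assms(1,2), of "\<lambda>d. v \<bullet> d"]
    by (auto intro: bounded_linear.linear bounded_linear_inner_right)
  have "F z - bregman \<phi> z y \<le> F x - bregman \<phi> x y" for z
    using v[of z] by (simp add: bregman_def y inner_diff_right)
  then show ?thesis
    by blast
qed

lemma left_env_sup_bregman:
  fixes \<phi> F :: "'a::euclidean_space \<Rightarrow> real"
  assumes touch: "\<And>x. \<exists>y. \<forall>z. F z - bregman \<phi> z y \<le> F x - bregman \<phi> x y"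
  defines "g \<equiv> \<lambda>y. SUP x. ereal (F x - bregman \<phi> x y)"
  shows "proper_fun g" and "(\<lambda>x. ereal (F x)) = left_env \<phi> g"
proof -
  have g_ge: "ereal (F x - bregman \<phi> x y) \<le> g y" for x y
    unfolding g_def by (rule SUP_upper) simp
  have g_attained: "\<exists>y. g y = ereal (F x - bregman \<phi> x y)" for x
  proof -
    obtain y where "\<And>z. F z - bregman \<phi> z y \<le> F x - bregman \<phi> x y"
      using touch by blast
    then have "g y \<le> ereal (F x - bregman \<phi> x y)"
      unfolding g_def by (intro SUP_least) simp
    then show ?thesis
      using g_ge[of x y] by (intro exI[of _ y]) simp
  qed
  show "proper_fun g"
    unfolding proper_fun_def
  proof
    show "\<forall>y. g y \<noteq> -\<infinity>"
      using g_ge by (metis MInfty_neq_ereal(1) ereal_infty_less_eq(2))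
    show "\<exists>y. g y \<noteq> \<infinity>"
      using g_attained[of 0] by (metis PInfty_neq_ereal(2))
  qed
  show "(\<lambda>x. ereal (F x)) = left_env \<phi> g"
  proof
    fix x
    have "ereal (F x) \<le> left_env \<phi> g x"
      unfolding left_env_def
    proof (rule INF_greatest)
      fix y
      have "ereal (F x - bregman \<phi> x y) + ereal (bregman \<phi> x y) \<le> g y + ereal (bregman \<phi> x y)"
        using g_ge by (rule add_right_mono)
      then show "ereal (F x) \<le> g y + ereal (bregman \<phi> x y)"
        by simp
    qed
    moreover obtain y where "g y = ereal (F x - bregman \<phi> x y)"
      using g_attained by blast
    then have "left_env \<phi> g x \<le> ereal (F x)"
      unfolding left_env_def using INF_lower[of y UNIV "\<lambda>y. g y + ereal (bregman \<phi> x y)"]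
      by simp
    ultimately show "ereal (F x) = left_env \<phi> g x"
      by simp
  qed
qed

lemma proper_fun_uminus_real_valued:
  assumes "proper_fun f" and "proper_fun (\<lambda>x. - f x)"
  obtains F where "f = (\<lambda>x. ereal (F x))"
proof -
  have "f x = ereal (real_of_ereal (f x))" for x
  proof -
    have "f x \<noteq> -\<infinity>" and "- f x \<noteq> -\<infinity>"
      using assms unfolding proper_fun_def by blast+
    then show ?thesis
      by (cases "f x") simp_all
  qed
  then have "f = (\<lambda>x. ereal (real_of_ereal (f x)))"
    by (rule ext)
  then show ?thesis
    by (rule that)
qed

lemma left_env_less_PInf:
  assumes "proper_fun g"
  shows "left_env \<phi> g x < \<infinity>"
proof -
  obtain y where "g y \<noteq> \<infinity>" and "g y \<noteq> -\<infinity>"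
    using assms unfolding proper_fun_def by blast
  then have "g y + ereal (bregman \<phi> x y) < \<infinity>"
    by (cases "g y") simp_all
  then show ?thesis
    unfolding left_env_def by (rule le_less_trans[OF INF_lower, rotated]) simp
qed

lemma B_smooth_imp_eq_left_env:
  fixes \<phi> :: "'a::euclidean_space \<Rightarrow> real"
  assumes diff: "\<And>x. \<phi> differentiable (at x)" and "super_coercive \<phi>" and smooth: "B_smooth \<phi> f"
  obtains g where "proper_fun g" and "f = left_env \<phi> g"
proof -
  obtain F where f_F: "f = (\<lambda>x. ereal (F x))"
    using proper_fun_uminus_real_valued smooth unfolding B_smooth_def by blast
  have "convex_on UNIV (\<lambda>x. \<phi> x - F x)"
    using smooth econvex_ereal_iff_convex_on[of "\<lambda>x. \<phi> x - F x"]
    by (simp add: B_smooth_def B_weakly_convex_def f_F)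
  then have touch: "\<exists>y. \<forall>z. F z - bregman \<phi> z y \<le> F x - bregman \<phi> x y" for x
    by (rule bregman_touching_point[OF diff \<open>super_coercive \<phi>\<close>])
  show ?thesis
    using left_env_sup_bregman[OF touch] that unfolding f_F by blast
qed

lemma B_smooth_left_env:
  fixes \<phi> :: "'a::euclidean_space \<Rightarrow> real"
  assumes diff: "\<And>x. \<phi> differentiable (at x)" and "convex_on UNIV \<phi>"
    and "proper_fun g" and proper: "proper_fun (left_env \<phi> g)" and "econvex (left_env \<phi> g)"
  shows "B_smooth \<phi> (left_env \<phi> g)"
proof -
  have "proper_fun (\<lambda>x. - left_env \<phi> g x)"
    unfolding proper_fun_def
  proof
    show "\<forall>x. - left_env \<phi> g x \<noteq> -\<infinity>"
      using left_env_less_PInf[OF \<open>proper_fun g\<close>] by simp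
    show "\<exists>x. - left_env \<phi> g x \<noteq> \<infinity>"
      using proper unfolding proper_fun_def by (metis ereal_uminus_uminus)
  qed
  then obtain F where f_F: "left_env \<phi> g = (\<lambda>x. ereal (F x))"
    using proper_fun_uminus_real_valued proper by blast
  have "convex_on UNIV (\<lambda>x. F x + \<phi> x)"
    using \<open>econvex (left_env \<phi> g)\<close> \<open>convex_on UNIV \<phi>\<close>
    by (intro convex_on_add) (simp_all add: f_F econvex_ereal_iff_convex_on)
  then have "B_weakly_convex \<phi> (left_env \<phi> g)"
    by (simp add: B_weakly_convex_def f_F econvex_ereal_iff_convex_on[symmetric])
  moreover have "B_weakly_convex \<phi> (\<lambda>x. - left_env \<phi> g x)"
    using econvex_ereal_minus_left_env[OF diff, of g]
    by (simp add: B_weakly_convex_def minus_ereal_def add.commute)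
  ultimately show ?thesis
    using proper \<open>proper_fun (\<lambda>x. - left_env \<phi> g x)\<close> by (simp add: B_smooth_def)
qed

theorem mainTheorem6:
  fixes \<phi> :: "'a::euclidean_space \<Rightarrow> real" and f :: "'a \<Rightarrow> ereal"
  assumes "legendre_full \<phi>"
    and "proper_fun f" and "lsc_fun f" and "econvex f"
  shows "B_smooth \<phi> f \<longleftrightarrow> (\<exists>g :: 'a \<Rightarrow> ereal. proper_fun g \<and> f = left_env \<phi> g)"
proof -
  have diff: "\<And>x. \<phi> differentiable (at x)" and "super_coercive \<phi>" and "convex_on UNIV \<phi>"
    using assms(1) by (simp_all add: legendre_full_def)
  show ?thesis
  proof
    assume "B_smooth \<phi> f"
    then show "\<exists>g. proper_fun g \<and> f = left_env \<phi> g"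
      using B_smooth_imp_eq_left_env[OF diff \<open>super_coercive \<phi>\<close>] by metis
  next
    assume "\<exists>g. proper_fun g \<and> f = left_env \<phi> g"
    then obtain g where "proper_fun g" and "f = left_env \<phi> g"
      by blast
    then show "B_smooth \<phi> f"
      using B_smooth_left_env[OF diff \<open>convex_on UNIV \<phi>\<close>] assms(2,4) by simp
  qed
qed

end
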